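(* Let $\{\mu_t\}$ be a free convolution semigroup, $\nu$ a unital linear functional on $\mathbb C[x]$, and $\nu_t=\nu\boxplus\mu_t$. Define the family of operators $\{\mathcal D_{t,\nu}\}_{t\in\mathbb R_+}$ on $C^1(\mathbb R_+)[x]$ by \[ \mathcal D_{t,\nu}f=\sum_{n=1}^\infty\frac{1}{(n-1)!}r_n\,\bigl\langle \mathrm{Id}\otimes\nu_t^{\otimes(n-1)},\,(\partial_x\otimes\mathrm{Id}^{\otimes(n-1)})\partial^{n-1}f\bigr\rangle+\partial_tf . \] Then: (1) for every $f\in C^1(\mathbb R_+)[x]$, $\partial_t\langle\nu_t,f\rangle=\langle\nu_t,\mathcal D_{t,\nu}f\rangle$; (2) if $f\in C^1(\mathbb R_+)[x]$ is a martingale polynomial for $\{\mu_t\}$ and $\nu=\delta_0$, then $\mathcal D_{t,\delta_0}f=0$.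
   Context: $C^1(\mathbb R_+)[x]$ is the space of polynomials in $x$ whose coefficients are complex differentiable functions of $t\in\mathbb R_+$; $\partial_t,\partial_x$ and functionals act coefficientwise. $\mu$ is a freely infinitely divisible probability measure with all moments finite, $r_n$ its free cumulants, and $\{\mu_t\}$ the free convolution semigroup with $\mu_1=\mu$, $R_{\mu_t}=tR_\mu$, where for a unital functional $\nu$ on $\mathbb C[x]$, $G_\nu(z)=\sum\langle\nu,x^n\rangle z^{-(n+1)}$, $K_\nu$ is its compositional inverse, $R_\nu=K_\nu-\frac1z=\sum_{n\ge1}r_n(\nu)z^{n-1}$, and $\nu\boxplus\mu_t$ is the unital functional with $R_{\nu\boxplus\mu_t}=R_\nu+tR_\mu$. The derivation $\partial:\mathbb C[x]\to\mathbb C[x]\otimes\mathbb C[x]\cong\mathbb C[x,y]$ is $\partial f(x,y)=\frac{f(x)-f(y)}{x-y}$; $\partial^0=\mathrm{Id}$ and $\partial^k=k(1\otimes\cdots\otimes1\otimes\partial)\partial^{k-1}:\mathbb C[x]\to\mathbb C[x]^{\otimes(k+1)}$, so $\partial^kx^n=k!\sum_{i(0)+\dots+i(k)=n-k}x^{i(0)}\otimes\cdots\otimes x^{i(k)}$. $\partial_x\otimes\mathrm{Id}^{\otimes(n-1)}$ differentiates the first tensor factor, and $\langle\mathrm{Id}\otimes\nu_t^{\otimes(n-1)},\cdot\rangle$ applies $\nu_t$ to the last $n-1$ tensor factors, giving a polynomial in $x$ (the sum is finite on polynomials). Martingale polynomial: $p(x,t)$ polynomial in $x$ with $\mathcal K_{s,t}(p(\cdot,t))=p(\cdot,s)$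 for $s<t$, where $\mathcal K_{s,t}$ is the linear operator on $\mathbb C[x]$ determined coefficientwise by $\mathcal K_{s,t}(\mathrm{Res}_z)=\mathrm{Res}_{F_{s,t}(z)}$, $\mathrm{Res}_z(x)=\frac1{z-x}=\sum x^nz^{-(n+1)}$, $F_{s,t}=K_{\mu_s}\circ G_{\mu_t}$. *)

theory Defs
  imports "HOL-Probability.Probability" "HOL-Computational_Algebra.Computational_Algebra"
begin

text \<open>A linear functional on C[x] is represented by its moment sequence
  (value on x^n); it is unital iff the 0-th moment is 1.\<close>

definition fun_app :: "(nat \<Rightarrow> complex) \<Rightarrow> complex poly \<Rightarrow> complex" where
  "fun_app m p = (\<Sum>k\<le>degree p. coeff p k * m k)"

text \<open>Cauchy transform G(z) = sum m_n z^-(n+1), written as a formal power series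
  in the variable w = 1/z, i.e. g(w) = sum m_n w^(n+1).\<close>
definition G_fps :: "(nat \<Rightarrow> complex) \<Rightarrow> complex fps" where
  "G_fps m = fps_X * Abs_fps m"

text \<open>K is the compositional inverse of G: G(K(z)) = z means g(1/K(z)) = z, i.e.
  1/K(z) = u(z) with u = fps_inv g = z v(z).  Hence R(z) = K(z) - 1/z = (1/v(z) - 1)/z
  and the free cumulant r_n (coefficient of z^(n-1) in R) is the coefficient of z^n
  in 1/v - 1.\<close>
definition free_cumulant :: "(nat \<Rightarrow> complex) \<Rightarrow> nat \<Rightarrow> complex" where
  "free_cumulant m n =
     (if n = 0 then 0 else (inverse (fps_shift 1 (fps_inv (G_fps m))) - 1) $ n)"

definition boxplus_t :: "(nat \<Rightarrow> complex) \<Rightarrow> (nat \<Rightarrow> complex) \<Rightarrow> real \<Rightarrow> (nat \<Rightarrow> complex)" where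
  "boxplus_t nu mu t = (THE m. m 0 = 1 \<and>
      (\<forall>n\<ge>1. free_cumulant m n = free_cumulant nu n + complex_of_real t * free_cumulant mu n))"

definition delta0 :: "nat \<Rightarrow> complex" where
  "delta0 n = (if n = 0 then 1 else 0)"

definition moments :: "real measure \<Rightarrow> nat \<Rightarrow> complex" where
  "moments M n = complex_of_real (integral\<^sup>L M (\<lambda>x. x ^ n))"

text \<open>Elements of C[x]^{tensor (k+1)} are represented by their coefficient functions on
  exponent lists [i0,...,ik] (coefficient of x^i0 tensor ... tensor x^ik).\<close>

text \<open>(1 tensor ... tensor 1 tensor partial) applied to a tensor.\<close>
definition dlast :: "(nat list \<Rightarrow> complex) \<Rightarrow> nat list \<Rightarrow> complex" where
  "dlast T e = (if 2 \<le> length e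
      then T (take (length e - 2) e @ [e ! (length e - 2) + e ! (length e - 1) + 1])
      else 0)"

fun partial_pow :: "nat \<Rightarrow> complex poly \<Rightarrow> nat list \<Rightarrow> complex" where
  "partial_pow 0 p = (\<lambda>e. if length e = 1 then coeff p (hd e) else 0)"
| "partial_pow (Suc k) p = (\<lambda>e. of_nat (Suc k) * dlast (partial_pow k p) e)"

definition dx_first :: "(nat list \<Rightarrow> complex) \<Rightarrow> nat list \<Rightarrow> complex" where
  "dx_first T e = (case e of [] \<Rightarrow> 0 | i # rest \<Rightarrow> of_nat (Suc i) * T (Suc i # rest))"

text \<open>< Id tensor nu^(tensor n), T > : apply nu to the last n tensor factors.\<close>
definition Id_nu_app :: "(nat \<Rightarrow> complex) \<Rightarrow> nat \<Rightarrow> (nat list \<Rightarrow> complex) \<Rightarrow> complex poly" where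
  "Id_nu_app m n T = Abs_poly (\<lambda>j.
      \<Sum>rest \<in> {rest. length rest = n \<and> T (j # rest) \<noteq> 0}. T (j # rest) * prod_list (map m rest))"

definition C1_poly :: "(real \<Rightarrow> complex poly) \<Rightarrow> bool" where
  "C1_poly f \<longleftrightarrow> (\<exists>N. \<forall>t\<ge>0. degree (f t) \<le> N) \<and>
     (\<forall>k. \<exists>f'. (\<forall>t\<ge>0. ((\<lambda>s. coeff (f s) k) has_vector_derivative f' t) (at t within {0..}))
              \<and> continuous_on {0..} f')"

definition poly_dt :: "(real \<Rightarrow> complex poly) \<Rightarrow> real \<Rightarrow> complex poly" where
  "poly_dt f t = Abs_poly (\<lambda>k. vector_derivative (\<lambda>s. coeff (f s) k) (at t within {0..}))"

text \<open>The series over n is finite: partial^(n-1) f(.,t) = 0 once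
  n - 1 > deg f(.,t), so we sum over n = 1 .. deg f(.,t) + 1.\<close>
definition D_op :: "(nat \<Rightarrow> complex) \<Rightarrow> (nat \<Rightarrow> complex) \<Rightarrow> (real \<Rightarrow> complex poly) \<Rightarrow> real \<Rightarrow> complex poly" where
  "D_op mu nu f t =
     (\<Sum>n\<in>{1..Suc (degree (f t))}.
        smult (free_cumulant mu n / fact (n - 1))
          (Id_nu_app (boxplus_t nu mu t) (n - 1) (dx_first (partial_pow (n - 1) (f t)))))
     + poly_dt f t"

text \<open>F_{s,t} = K_{mu_s} o G_{mu_t}; in the variable w = 1/z, 1/F_{s,t} is the power
  series phi = fps_inv(g_s) oo g_t.  K_{s,t}(Res_z) = Res_{F(z)} reads
  sum_n K(x^n) w^(n+1) = sum_k x^k phi^(k+1), i.e. K(x^n) = sum_k [w^(n+1)] phi^(k+1) x^k.\<close>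
definition phi_st :: "(real \<Rightarrow> real measure) \<Rightarrow> real \<Rightarrow> real \<Rightarrow> complex fps" where
  "phi_st mut s t = fps_inv (G_fps (moments (mut s))) oo G_fps (moments (mut t))"

definition K_op :: "(real \<Rightarrow> real measure) \<Rightarrow> real \<Rightarrow> real \<Rightarrow> complex poly \<Rightarrow> complex poly" where
  "K_op mut s t p = (\<Sum>n\<le>degree p. smult (coeff p n)
       (\<Sum>k\<le>n. monom ((phi_st mut s t ^ (k + 1)) $ (n + 1)) k))"

definition martingale_poly :: "(real \<Rightarrow> real measure) \<Rightarrow> (real \<Rightarrow> complex poly) \<Rightarrow> bool" where
  "martingale_poly mut p \<longleftrightarrow> (\<forall>s t. 0 \<le> s \<longrightarrow> s < t \<longrightarrow> K_op mut s t (p t) = p s)"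

end

theory Submission
  imports Defs
begin

(*
  In the variable w = 1/z, the moment series M of a unital functional and its cumulant series
  C = sum_n r_n w^n are related by M = 1 + C(w M).  For nu_t = nu boxplus mu_t the cumulant
  series is C_nu + t C_mu, and differentiating the functional equation in t gives the velocity
  dM_t/dt = (w M_t)' * w * R_mu(w M_t) of the moments, where R_mu = C_mu / w.  Applying nu_t to
  the last n - 1 tensor factors of the n-th summand of D_{t,nu} f produces the coefficients of
  M_t^(n-1), so that <nu_t, D_{t,nu} f - d_t f> is the pairing of f with this velocity; part (1)
  is then the product rule for d_t <nu_t, f>.

  For part (2), the martingale property expresses coefficient k of f(s) as the pairing of f(t)
  with the coefficients of phi_{s,t}^(k+1), phi_{s,t} = G_s^(-1) o G_t, for every t >= s.  This
  pairing is constant in t; differentiating it at t = s, where phi_{s,s} = w, gives exactly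
  coefficient k of D_{s,delta_0} f, which therefore vanishes.
*)

unbundle no vec_syntax

lemma fps_X_mult_fps_shift_1:
  fixes f :: "'a::comm_ring_1 fps"
  assumes "f $ 0 = 0"
  shows "fps_X * fps_shift 1 f = f"
  using assms by (intro fps_ext) simp

lemma fps_inv_nth_0 [simp]: "fps_inv a $ 0 = 0"
  by (simp add: fps_inv_def)

lemma fps_inv_nth_1 [simp]: "fps_inv (a :: 'a::field fps) $ Suc 0 = 1 / a $ Suc 0"
  by (simp add: fps_inv_def)

lemma fps_inv_fps_X [simp]: "fps_inv (fps_X :: 'a::field fps) = fps_X"
  using fps_inv_right[of "fps_X :: 'a fps"] by simp

lemma fps_mult_nth_cong:
  assumes "\<And>l. l \<le> i \<Longrightarrow> P $ l = Q $ l"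
  shows "(P * B) $ i = (Q * B) $ i" and "(B * P) $ i = (B * Q) $ i"
  using assms by (simp_all add: fps_mult_nth)

lemma fps_mult_nth_cong_below:
  fixes B :: "'a::comm_ring_1 fps"
  assumes "\<And>l. l < i \<Longrightarrow> P $ l = Q $ l" and "B $ 0 = 0"
  shows "(P * B) $ i = (Q * B) $ i"
  unfolding fps_mult_nth
proof (rule sum.cong)
  fix l assume "l \<in> {0..i}"
  then show "P $ l * B $ (i - l) = Q $ l * B $ (i - l)"
    using assms by (cases "l < i") auto
qed simp

text \<open>The sum on the left is the derivative of the truncation of u at degree i, composed with A;
  the truncation does not affect coefficient i.\<close>
lemma fps_compose_variation_nth:
  fixes u A A' :: "'a::idom fps"
  assumes A0: "A $ 0 = 0" and A'0: "A' $ 0 = 0"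
  shows "((\<Sum>j=0..i. fps_const (of_nat j * u $ j) * A ^ (j - 1)) * A') $ i
           = ((fps_deriv u oo A) * A') $ i"
proof (rule fps_mult_nth_cong_below[OF _ A'0])
  fix l assume l: "l < i"
  then obtain i' where i': "i = Suc i'" by (cases i) auto
  have "(\<Sum>j=0..i. fps_const (of_nat j * u $ j) * A ^ (j - 1)) $ l
      = (\<Sum>j=0..i'. of_nat (Suc j) * u $ Suc j * (A ^ j) $ l)"
    unfolding i' fps_sum_nth fps_mult_left_const_nth by (subst sum.atLeast0_atMost_Suc_shift) simp
  also have "\<dots> = (\<Sum>j=0..l. of_nat (Suc j) * u $ Suc j * (A ^ j) $ l)"
    using l i' startsby_zero_power_prefix[OF A0]
    by (intro sum.mono_neutral_right) auto
  also have "\<dots> = (fps_deriv u oo A) $ l"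
    by (simp add: fps_compose_nth mult_ac)
  finally show "(\<Sum>j=0..i. fps_const (of_nat j * u $ j) * A ^ (j - 1)) $ l = (fps_deriv u oo A) $ l" .
qed

lemma fps_deriv_fps_inv_power_compose:
  fixes A :: "'a::field_char_0 fps"
  assumes A0: "A $ 0 = 0" and A1: "A $ 1 \<noteq> 0"
  shows "(fps_deriv (fps_inv A ^ Suc k) oo A) * fps_deriv A = of_nat (Suc k) * fps_X ^ k"
proof -
  have "(fps_deriv (fps_inv A ^ Suc k) oo A) * fps_deriv A = fps_deriv (fps_inv A ^ Suc k oo A)"
    by (rule fps_compose_deriv[OF A0, symmetric])
  also have "fps_inv A ^ Suc k oo A = fps_X ^ Suc k"
    using fps_compose_power[OF A0, of "fps_inv A" "Suc k"] fps_inv[OF A0 A1] by simp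
  also have "fps_deriv (fps_X ^ Suc k :: 'a fps) = of_nat (Suc k) * fps_X ^ k"
    by (induction k) (simp_all add: algebra_simps)
  finally show ?thesis .
qed

section \<open>The cumulant series\<close>

lemma G_fps_nth_0 [simp]: "G_fps m $ 0 = 0"
  and G_fps_nth_1 [simp]: "G_fps m $ Suc 0 = m 0"
  by (simp_all add: G_fps_def)

lemma G_fps_eq_iff: "G_fps m = G_fps m' \<longleftrightarrow> m = m'"
  by (auto simp: G_fps_def fps_eq_iff fun_eq_iff dest: spec[of _ "Suc n" for n])

definition cumulant_fps :: "(nat \<Rightarrow> complex) \<Rightarrow> complex fps" where
  "cumulant_fps m = inverse (fps_shift 1 (fps_inv (G_fps m))) - 1"

lemma cumulant_fps_nth_0: "m 0 = 1 \<Longrightarrow> cumulant_fps m $ 0 = 0"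
  by (simp add: cumulant_fps_def)

lemma free_cumulant_eq_cumulant_fps_nth: "m 0 = 1 \<Longrightarrow> free_cumulant m n = cumulant_fps m $ n"
  by (simp add: free_cumulant_def cumulant_fps_def)

lemma fps_shift_cumulant_fps:
  "m 0 = 1 \<Longrightarrow> fps_shift 1 (cumulant_fps m) = Abs_fps (\<lambda>k. free_cumulant m (Suc k))"
  by (intro fps_ext) (simp add: free_cumulant_eq_cumulant_fps_nth)

lemma moment_fps_eq_cumulant_fps_compose:
  assumes m0: "m 0 = 1"
  shows "Abs_fps m = 1 + (cumulant_fps m oo G_fps m)"
proof -
  define g where "g = G_fps m"
  define v where "v = fps_shift 1 (fps_inv g)"
  have g0: "g $ 0 = 0" and g1: "g $ 1 = 1" using m0 by (simp_all add: g_def)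
  have v0: "v $ 0 = 1" using g1 by (simp add: v_def)
  have "(fps_X * v) oo g = fps_X"
    unfolding v_def using fps_inv[OF g0] g1 fps_X_mult_fps_shift_1[of "fps_inv g"] by simp
  then have "g * (v oo g) = fps_X"
    by (simp add: fps_compose_mult_distrib[OF g0] g0)
  then have "fps_X * (Abs_fps m * (v oo g)) = fps_X * 1"
    by (simp add: g_def G_fps_def mult.assoc)
  then have "Abs_fps m * (v oo g) = 1"
    by (subst (asm) mult_left_cancel) auto
  then have "Abs_fps m = inverse (v oo g)"
    by (metis fps_inverse_unique mult.commute)
  also have "\<dots> = inverse v oo g"
    using fps_inverse_compose[OF g0, of v] v0 by simp
  also have "\<dots> = 1 + (cumulant_fps m oo g)"
    by (simp add: cumulant_fps_def v_def g_def fps_compose_add_distrib fps_compose_sub_distrib)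
  finally show ?thesis unfolding g_def .
qed

lemma cumulant_fps_inj:
  assumes "m 0 = 1" "m' 0 = 1" "cumulant_fps m = cumulant_fps m'"
  shows "m = m'"
proof -
  have v0: "fps_shift 1 (fps_inv (G_fps m)) $ 0 \<noteq> 0" "fps_shift 1 (fps_inv (G_fps m')) $ 0 \<noteq> 0"
    using assms(1,2) by simp_all
  have "fps_shift 1 (fps_inv (G_fps m)) = fps_shift 1 (fps_inv (G_fps m'))"
    using assms(3) fps_inverse_idempotent[OF v0(1)] fps_inverse_idempotent[OF v0(2)]
    by (simp add: cumulant_fps_def)
  then have "fps_inv (G_fps m) = fps_inv (G_fps m')"
    by (metis fps_X_mult_fps_shift_1 fps_inv_nth_0)
  then have "fps_inv (fps_inv (G_fps m)) = fps_inv (fps_inv (G_fps m'))"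
    by simp
  then show ?thesis
    using assms(1,2) by (simp add: fps_inv_idempotent G_fps_eq_iff)
qed

lemma cumulant_fps_surj:
  fixes C :: "complex fps"
  assumes C0: "C $ 0 = 0"
  obtains m where "m 0 = 1" "cumulant_fps m = C"
proof
  define u where "u = fps_X * inverse (1 + C)"
  define m where "m = (\<lambda>n. fps_inv u $ Suc n)"
  have u0: "u $ 0 = 0" and u1: "u $ 1 = 1"
    using C0 by (simp_all add: u_def)
  show m0: "m 0 = 1" using u1 by (simp add: m_def)
  have "G_fps m = fps_inv u"
    by (intro fps_ext) (simp add: G_fps_def m_def split: nat.split)
  then have "fps_inv (G_fps m) = u"
    using u0 u1 by (simp add: fps_inv_idempotent)
  moreover have "fps_shift 1 u = inverse (1 + C)"
    by (simp only: u_def mult.commute[of fps_X] fps_shift_times_fps_X')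
  ultimately show "cumulant_fps m = C"
    using C0 by (simp add: cumulant_fps_def fps_inverse_idempotent)
qed

lemma boxplus_t_eqI:
  assumes nu0: "nu 0 = 1" and mu0: "mu 0 = 1" and m0: "m 0 = 1"
    and cumulants: "\<forall>n\<ge>1. free_cumulant m n = free_cumulant nu n + of_real t * free_cumulant mu n"
  shows "boxplus_t nu mu t = m"
  unfolding boxplus_t_def
proof (rule the_equality)
  show "m 0 = 1 \<and> (\<forall>n\<ge>1. free_cumulant m n = free_cumulant nu n + of_real t * free_cumulant mu n)"
    using m0 cumulants ..
next
  fix m' assume m': "m' 0 = 1 \<and>
      (\<forall>n\<ge>1. free_cumulant m' n = free_cumulant nu n + of_real t * free_cumulant mu n)"
  have "cumulant_fps m' $ n = cumulant_fps m $ n" for n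
    using m' m0 cumulants cumulant_fps_nth_0[of m] cumulant_fps_nth_0[of m']
    by (cases "n = 0") (auto simp: free_cumulant_eq_cumulant_fps_nth[symmetric])
  then show "m' = m"
    using m' m0 by (intro cumulant_fps_inj) (auto simp: fps_eq_iff)
qed

lemma boxplus_t_cumulant_fps:
  assumes nu0: "nu 0 = 1" and mu0: "mu 0 = 1"
  shows "boxplus_t nu mu t 0 = 1"
    and "cumulant_fps (boxplus_t nu mu t) = cumulant_fps nu + fps_const (of_real t) * cumulant_fps mu"
proof -
  define C where "C = cumulant_fps nu + fps_const (of_real t) * cumulant_fps mu"
  have "C $ 0 = 0"
    using nu0 mu0 by (simp add: C_def cumulant_fps_nth_0)
  then obtain m where m: "m 0 = 1" "cumulant_fps m = C"
    by (rule cumulant_fps_surj)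
  have "boxplus_t nu mu t = m"
    using nu0 mu0 m by (intro boxplus_t_eqI) (auto simp: free_cumulant_eq_cumulant_fps_nth C_def)
  then show "boxplus_t nu mu t 0 = 1" "cumulant_fps (boxplus_t nu mu t) = C"
    using m by simp_all
qed

lemma cumulant_fps_delta0: "cumulant_fps delta0 = 0"
proof -
  have "G_fps delta0 = fps_X"
    by (intro fps_ext) (simp add: G_fps_def delta0_def fps_X_mult_nth)
  then show ?thesis
    by (simp add: cumulant_fps_def fps_shift_one)
qed

lemma free_cumulant_delta0: "free_cumulant delta0 n = 0"
  using free_cumulant_eq_cumulant_fps_nth[of delta0 n] by (simp add: delta0_def cumulant_fps_delta0)

lemma moments_0: "prob_space M \<Longrightarrow> moments M 0 = 1"
  by (simp add: moments_def prob_space.prob_space)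

definition has_fps_derivative_upto ::
    "nat \<Rightarrow> (real \<Rightarrow> 'a::real_normed_vector fps) \<Rightarrow> 'a fps \<Rightarrow> real \<Rightarrow> real set \<Rightarrow> bool" where
  "has_fps_derivative_upto N F F' t S \<longleftrightarrow>
     (\<forall>i\<le>N. ((\<lambda>s. F s $ i) has_vector_derivative F' $ i) (at t within S))"

lemma has_fps_derivative_upto_const: "has_fps_derivative_upto N (\<lambda>s. c) 0 t S"
  by (simp add: has_fps_derivative_upto_def)

lemma has_fps_derivative_upto_of_real:
  "has_fps_derivative_upto N (\<lambda>s. fps_const (of_real s :: 'a::real_normed_algebra_1)) 1 t S"
proof -
  have "((\<lambda>s. of_real s :: 'a) has_vector_derivative 1) (at t within S)"
    using has_vector_derivative_of_real[OF DERIV_ident] by simp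
  then show ?thesis
    by (auto simp: has_fps_derivative_upto_def fps_one_nth)
qed

lemma has_fps_derivative_upto_add:
  "has_fps_derivative_upto N F F' t S \<Longrightarrow> has_fps_derivative_upto N G G' t S
    \<Longrightarrow> has_fps_derivative_upto N (\<lambda>s. F s + G s) (F' + G') t S"
  by (auto simp: has_fps_derivative_upto_def intro!: has_vector_derivative_add)

lemma has_fps_derivative_upto_mult:
  fixes F G :: "real \<Rightarrow> 'a::{real_normed_algebra,comm_ring} fps"
  assumes F: "has_fps_derivative_upto N F F' t S" and G: "has_fps_derivative_upto N G G' t S"
  shows "has_fps_derivative_upto N (\<lambda>s. F s * G s) (F' * G t + F t * G') t S"
  unfolding has_fps_derivative_upto_def
proof (intro allI impI)
  fix i assume "i \<le> N"
  then have "((\<lambda>s. \<Sum>j=0..i. F s $ j * G s $ (i - j)) has_vector_derivative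
      (\<Sum>j=0..i. F t $ j * G' $ (i - j) + F' $ j * G t $ (i - j))) (at t within S)"
    using F G by (auto simp: has_fps_derivative_upto_def
        intro!: has_vector_derivative_sum has_vector_derivative_mult)
  then show "((\<lambda>s. (F s * G s) $ i) has_vector_derivative (F' * G t + F t * G') $ i) (at t within S)"
    by (simp add: fps_mult_nth sum.distrib add.commute)
qed

lemma has_fps_derivative_upto_power:
  fixes F :: "real \<Rightarrow> 'a::{real_normed_algebra_1,comm_ring_1} fps"
  assumes F: "has_fps_derivative_upto N F F' t S"
  shows "has_fps_derivative_upto N (\<lambda>s. F s ^ k) (of_nat k * F t ^ (k - 1) * F') t S"
proof (induction k)
  case 0
  then show ?case using has_fps_derivative_upto_const[of N 1] by simp
next
  case (Suc k)
  have "has_fps_derivative_upto N (\<lambda>s. F s * F s ^ k) (F' * F t ^ k + F t * (of_nat k * F t ^ (k - 1) * F')) t S"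
    by (rule has_fps_derivative_upto_mult[OF F Suc])
  moreover have "F' * F t ^ k + F t * (of_nat k * F t ^ (k - 1) * F') = of_nat (Suc k) * F t ^ k * F'"
    by (cases k) (simp_all add: algebra_simps)
  ultimately show ?case by simp
qed

lemma has_fps_derivative_upto_compose:
  fixes A :: "real \<Rightarrow> 'a::{real_normed_field} fps"
  assumes A: "has_fps_derivative_upto N A A' t S" and A0: "A t $ 0 = 0" and A'0: "A' $ 0 = 0"
  shows "has_fps_derivative_upto N (\<lambda>s. u oo A s) ((fps_deriv u oo A t) * A') t S"
  unfolding has_fps_derivative_upto_def
proof (intro allI impI)
  fix i assume i: "i \<le> N"
  have "((\<lambda>s. \<Sum>j=0..i. u $ j * (A s ^ j) $ i) has_vector_derivative
      (\<Sum>j=0..i. u $ j * (of_nat j * A t ^ (j - 1) * A') $ i)) (at t within S)"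
    using has_fps_derivative_upto_power[OF A] i
    by (auto simp: has_fps_derivative_upto_def
        intro!: has_vector_derivative_sum has_vector_derivative_mult_right)
  also have "(\<Sum>j=0..i. u $ j * (of_nat j * A t ^ (j - 1) * A') $ i)
      = (\<Sum>j=0..i. (fps_const (of_nat j * u $ j) * (A t ^ (j - 1) * A')) $ i)"
    by (simp only: fps_mult_left_const_nth mult.assoc fps_of_nat[symmetric]) (simp add: mult_ac)
  also have "\<dots> = ((\<Sum>j=0..i. fps_const (of_nat j * u $ j) * A t ^ (j - 1)) * A') $ i"
    by (simp only: fps_sum_nth[symmetric] sum_distrib_right mult.assoc)
  finally show "((\<lambda>s. (u oo A s) $ i) has_vector_derivative ((fps_deriv u oo A t) * A') $ i) (at t within S)"
    unfolding fps_compose_nth fps_compose_variation_nth[OF A0 A'0] .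
qed

lemma has_fps_derivative_upto_shift:
  "has_fps_derivative_upto (Suc N) F F' t S \<Longrightarrow>
     has_fps_derivative_upto N (\<lambda>s. fps_shift 1 (F s)) (fps_shift 1 F') t S"
  by (simp add: has_fps_derivative_upto_def)

section \<open>The moment series of the free convolution in time\<close>

definition moment_drift :: "(nat \<Rightarrow> complex) \<Rightarrow> (nat \<Rightarrow> complex) \<Rightarrow> complex fps" where
  "moment_drift mu m = fps_deriv (G_fps m) * (fps_X * (fps_shift 1 (cumulant_fps mu) oo G_fps m))"

text \<open>Differentiating \<open>M = 1 + (C oo X M)\<close> along \<open>C + s cumulant_fps mu\<close> gives the linear equation
  \<open>\<delta>M = (cumulant_fps mu oo X M) + (C' oo X M) X \<delta>M\<close>; the drift is its solution.\<close>
lemma moment_drift_linearized_eq: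
  assumes M: "Abs_fps m = 1 + (C oo G_fps m)" and mu0: "mu 0 = 1"
  shows "moment_drift mu m =
           (cumulant_fps mu oo G_fps m) + (fps_deriv C oo G_fps m) * (fps_X * moment_drift mu m)"
proof -
  define A where "A = G_fps m"
  define S where "S = fps_shift 1 (cumulant_fps mu) oo A"
  define P where "P = fps_deriv C oo A"
  have A0: "A $ 0 = 0" by (simp add: A_def)
  have "fps_deriv (Abs_fps m) = P * fps_deriv A"
    using M fps_compose_deriv[OF A0, of C] by (simp add: A_def P_def)
  then have A': "fps_deriv A = Abs_fps m + fps_X * (P * fps_deriv A)"
    by (simp add: A_def G_fps_def)
  have "cumulant_fps mu oo A = (fps_X * fps_shift 1 (cumulant_fps mu)) oo A"
    by (simp only: fps_X_mult_fps_shift_1[OF cumulant_fps_nth_0[of mu, OF mu0]])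
  also have "\<dots> = A * S"
    by (simp add: fps_compose_mult_distrib[OF A0] A0 S_def)
  finally have "cumulant_fps mu oo A = fps_X * Abs_fps m * S"
    by (simp add: A_def G_fps_def)
  then show ?thesis
    unfolding moment_drift_def A_def[symmetric] S_def[symmetric] P_def[symmetric]
    by (subst (1) A') (simp add: algebra_simps)
qed

text \<open>Coefficient N + 1 of \<open>G_fps m\<close> is coefficient N of \<open>1 + (C oo G_fps m)\<close>, which only
  involves the coefficients up to N of \<open>G_fps m\<close>: this drives the induction.\<close>
lemma G_fps_boxplus_t_has_fps_derivative:
  assumes nu0: "nu 0 = 1" and mu0: "mu 0 = 1"
  shows "has_fps_derivative_upto N (\<lambda>s. G_fps (boxplus_t nu mu s))
           (fps_X * moment_drift mu (boxplus_t nu mu t)) t S"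
proof (induction N)
  case 0
  then show ?case by (simp add: has_fps_derivative_upto_def)
next
  case (Suc N)
  define A where "A = (\<lambda>s. G_fps (boxplus_t nu mu s))"
  define D where "D = moment_drift mu (boxplus_t nu mu t)"
  define C where "C = (\<lambda>s. cumulant_fps nu + fps_const (of_real s) * cumulant_fps mu)"
  have A0: "A s $ 0 = 0" for s by (simp add: A_def)
  have M: "Abs_fps (boxplus_t nu mu s) = 1 + (C s oo A s)" for s
    using moment_fps_eq_cumulant_fps_compose[of "boxplus_t nu mu s"] boxplus_t_cumulant_fps[of nu mu, OF nu0 mu0]
    by (simp add: A_def C_def)
  have CA: "1 + (C s oo A s) = 1 + ((cumulant_fps nu oo A s)
              + fps_const (of_real s) * (cumulant_fps mu oo A s))" for s
    by (simp add: C_def fps_compose_add_distrib fps_const_mult_apply_left)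
  have "has_fps_derivative_upto N (\<lambda>s. 1 + (C s oo A s))
     (0 + ((fps_deriv (cumulant_fps nu) oo A t) * (fps_X * D)
      + (1 * (cumulant_fps mu oo A t) + fps_const (of_real t) *
            ((fps_deriv (cumulant_fps mu) oo A t) * (fps_X * D))))) t S"
    unfolding CA using Suc[folded A_def D_def]
    by (intro has_fps_derivative_upto_add has_fps_derivative_upto_mult has_fps_derivative_upto_const
        has_fps_derivative_upto_of_real has_fps_derivative_upto_compose A0) simp_all
  also have "0 + ((fps_deriv (cumulant_fps nu) oo A t) * (fps_X * D)
      + (1 * (cumulant_fps mu oo A t) + fps_const (of_real t) *
            ((fps_deriv (cumulant_fps mu) oo A t) * (fps_X * D)))) = D"
    using moment_drift_linearized_eq[of _ _ mu, OF M[of t, unfolded A_def] mu0]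
    by (simp add: D_def A_def C_def fps_compose_add_distrib fps_const_mult_apply_left[symmetric]
        algebra_simps)
  finally have "((\<lambda>s. A s $ Suc N) has_vector_derivative (fps_X * D) $ Suc N) (at t within S)"
    unfolding has_fps_derivative_upto_def M[symmetric] by (simp add: A_def G_fps_def)
  with Suc show ?case
    unfolding has_fps_derivative_upto_def A_def D_def by (auto simp: le_Suc_eq)
qed

lemma boxplus_t_has_vector_derivative:
  assumes "nu 0 = 1" and "mu 0 = 1"
  shows "((\<lambda>s. boxplus_t nu mu s k) has_vector_derivative moment_drift mu (boxplus_t nu mu t) $ k)
           (at t within S)"
  using G_fps_boxplus_t_has_fps_derivative[of nu mu, OF assms, of "Suc k" t S]
  unfolding has_fps_derivative_upto_def by (auto simp: G_fps_def dest: spec[of _ "Suc k"])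

text \<open>\<open>fps_inv (A s) oo A t\<close> is the series \<open>phi_st\<close> of \<open>F\<^sub>s\<^sub>,\<^sub>t\<close>; at t = s it is X.\<close>
lemma shift_fps_inv_compose_power_has_fps_derivative:
  assumes nu0: "nu 0 = 1" and mu0: "mu 0 = 1"
  defines "A \<equiv> \<lambda>t. G_fps (boxplus_t nu mu t)"
  shows "has_fps_derivative_upto N (\<lambda>t. fps_shift 1 ((fps_inv (A s) oo A t) ^ Suc k))
           (of_nat (Suc k) * fps_X ^ Suc k * (fps_shift 1 (cumulant_fps mu) oo A s)) s S"
proof -
  define u where "u = fps_inv (A s)"
  define Sg where "Sg = fps_shift 1 (cumulant_fps mu) oo A s"
  have A0: "A t $ 0 = 0" for t by (simp add: A_def)
  have A1: "A s $ 1 \<noteq> 0"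
    using boxplus_t_cumulant_fps(1)[of nu mu, OF nu0 mu0] by (simp add: A_def)
  have pow: "(u oo A t) ^ Suc k = u ^ Suc k oo A t" for t
    by (rule fps_compose_power[OF A0])
  have "has_fps_derivative_upto (Suc N) (\<lambda>t. u ^ Suc k oo A t)
      ((fps_deriv (u ^ Suc k) oo A s) * (fps_X * moment_drift mu (boxplus_t nu mu s))) s S"
    using G_fps_boxplus_t_has_fps_derivative[of nu mu, OF nu0 mu0]
    by (intro has_fps_derivative_upto_compose) (simp_all add: A_def)
  also have "(fps_deriv (u ^ Suc k) oo A s) * (fps_X * moment_drift mu (boxplus_t nu mu s))
      = ((fps_deriv (u ^ Suc k) oo A s) * fps_deriv (A s)) * fps_X ^ 2 * Sg"
    by (simp add: moment_drift_def A_def Sg_def power2_eq_square mult_ac)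
  also have "\<dots> = (of_nat (Suc k) * fps_X ^ Suc k * Sg) * fps_X"
    using fps_deriv_fps_inv_power_compose[OF A0 A1, of k]
    by (simp add: u_def power2_eq_square mult_ac)
  finally have "has_fps_derivative_upto (Suc N) (\<lambda>t. (u oo A t) ^ Suc k)
      ((of_nat (Suc k) * fps_X ^ Suc k * Sg) * fps_X) s S"
    unfolding pow .
  from has_fps_derivative_upto_shift[OF this] show ?thesis
    by (simp only: fps_shift_times_fps_X' u_def Sg_def)
qed

section \<open>Pairing polynomials with power series\<close>

definition poly_pairing :: "'a::comm_semiring_1 poly \<Rightarrow> 'a fps \<Rightarrow> 'a" where
  "poly_pairing p F = (\<Sum>q\<le>degree p. coeff p q * F $ q)"

lemma fun_app_eq_poly_pairing: "fun_app m p = poly_pairing p (Abs_fps m)"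
  by (simp add: fun_app_def poly_pairing_def)

lemma poly_pairing_upto:
  "degree p \<le> N \<Longrightarrow> poly_pairing p F = (\<Sum>q\<le>N. coeff p q * F $ q)"
  unfolding poly_pairing_def by (rule sum.mono_neutral_left) (auto simp: coeff_eq_0)

lemma poly_pairing_add_left: "poly_pairing (p + q) F = poly_pairing p F + poly_pairing q F"
proof -
  define N where "N = max (degree p) (degree q)"
  have "degree (p + q) \<le> N" "degree p \<le> N" "degree q \<le> N"
    by (auto simp: N_def degree_add_le)
  then show ?thesis
    by (simp add: poly_pairing_upto sum.distrib algebra_simps)
qed

lemma poly_pairing_cong:
  "(\<And>q. q \<le> degree p \<Longrightarrow> F $ q = G $ q) \<Longrightarrow> poly_pairing p F = poly_pairing p G"
  by (simp add: poly_pairing_def)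

lemma poly_pairing_sum_const_mult:
  "finite K \<Longrightarrow>
     poly_pairing p (\<Sum>k\<in>K. fps_const (c k) * F k) = (\<Sum>k\<in>K. c k * poly_pairing p (F k))"
  unfolding poly_pairing_def fps_sum_nth fps_mult_left_const_nth sum_distrib_left
  by (subst sum.swap) (simp add: mult_ac)

lemma poly_pairing_const_mult: "poly_pairing p (fps_const c * F) = c * poly_pairing p F"
  by (simp add: poly_pairing_def sum_distrib_left mult_ac)

lemma poly_pairing_fps_X_power_mult:
  "poly_pairing p (fps_X ^ c * G) = (\<Sum>b\<le>degree p. coeff p (b + c) * G $ b)"
proof -
  define d where "d = degree p"
  define F where "F = (\<lambda>q. coeff p q * (fps_X ^ c * G) $ q)"
  have "poly_pairing p (fps_X ^ c * G) = (\<Sum>q\<le>d + c. F q)"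
    by (simp add: F_def d_def poly_pairing_upto)
  also have "\<dots> = (\<Sum>q\<in>{c..d + c}. F q)"
    by (rule sum.mono_neutral_right) (auto simp: F_def fps_X_power_mult_nth)
  also have "\<dots> = (\<Sum>b\<le>d. F (b + c))"
    using sum.shift_bounds_cl_nat_ivl[of F 0 c d] by (simp add: atLeast0AtMost)
  finally show ?thesis
    by (simp add: F_def d_def fps_X_power_mult_nth)
qed

lemma poly_pairing_fps_X_power: "poly_pairing (p :: 'a::comm_ring_1 poly) (fps_X ^ k) = coeff p k"
proof -
  have "poly_pairing p (fps_X ^ k) = (\<Sum>b\<le>degree p. coeff p (b + k) * (1 :: 'a fps) $ b)"
    using poly_pairing_fps_X_power_mult[of p k 1] by simp
  also have "\<dots> = (\<Sum>b\<le>degree p. if b = 0 then coeff p k else 0)"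
    by (intro sum.cong) (auto simp: fps_one_nth)
  finally show ?thesis by simp
qed

lemma poly_pairing_mult_compose:
  fixes A :: "'a::comm_ring_1 fps"
  assumes A0: "A $ 0 = 0"
  shows "poly_pairing p (B * (C oo A)) = (\<Sum>k\<le>degree p. C $ k * poly_pairing p (B * A ^ k))"
proof -
  have "(C oo A) $ l = (\<Sum>k\<le>degree p. fps_const (C $ k) * A ^ k) $ l" if "l \<le> degree p" for l
    unfolding fps_compose_nth fps_sum_nth fps_mult_left_const_nth
    using that startsby_zero_power_prefix[OF A0] by (intro sum.mono_neutral_left) auto
  then have "poly_pairing p (B * (C oo A)) = poly_pairing p (B * (\<Sum>k\<le>degree p. fps_const (C $ k) * A ^ k))"
    by (intro poly_pairing_cong fps_mult_nth_cong(2)) simp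
  also have "B * (\<Sum>k\<le>degree p. fps_const (C $ k) * A ^ k) = (\<Sum>k\<le>degree p. fps_const (C $ k) * (B * A ^ k))"
    by (simp only: sum_distrib_left mult.left_commute[of B])
  finally show ?thesis
    by (simp only: poly_pairing_sum_const_mult finite_atMost)
qed

lemma has_vector_derivative_poly_pairing:
  fixes p :: "real \<Rightarrow> 'a::real_normed_field poly"
  assumes t: "t \<in> S" and deg: "\<And>s. s \<in> S \<Longrightarrow> degree (p s) \<le> N" and deg': "degree p' \<le> N"
    and p: "\<And>k. ((\<lambda>s. coeff (p s) k) has_vector_derivative coeff p' k) (at t within S)"
    and F: "has_fps_derivative_upto N F F' t S"
  shows "((\<lambda>s. poly_pairing (p s) (F s)) has_vector_derivative
           poly_pairing (p t) F' + poly_pairing p' (F t)) (at t within S)"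
proof -
  have "((\<lambda>s. \<Sum>q\<le>N. coeff (p s) q * F s $ q) has_vector_derivative
          (\<Sum>q\<le>N. coeff (p t) q * F' $ q + coeff p' q * F t $ q)) (at t within S)"
    using F unfolding has_fps_derivative_upto_def
    by (intro has_vector_derivative_sum has_vector_derivative_mult p) simp
  moreover have "poly_pairing (p s) (F s) = (\<Sum>q\<le>N. coeff (p s) q * F s $ q)" if "s \<in> S" for s
    using deg[OF that] by (rule poly_pairing_upto)
  ultimately show ?thesis
    using t deg[OF t] deg' 
    by (simp add: has_vector_derivative_transform[of t S] poly_pairing_upto sum.distrib)
qed

section \<open>The cumulant part of the operator\<close>

lemma partial_pow_closed_form:
  "partial_pow k p e = fact k * (if length e = Suc k then coeff p (sum_list e + k) else 0)"
proof (induction k arbitrary: e)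
  case 0
  then show ?case
    by (cases e) auto
next
  case (Suc k)
  show ?case
  proof (cases "length e = Suc (Suc k)")
    case True
    then obtain xs a b where e: "e = xs @ [a, b]" and xs: "length xs = k"
      by (metis append_butlast_last_id length_0_conv length_butlast butlast_snoc diff_Suc_1
          nat.distinct(1) append.assoc append_Cons append_Nil)
    then have "dlast (partial_pow k p) e = fact k * coeff p (sum_list e + Suc k)"
      by (simp add: dlast_def Suc.IH nth_append)
    then show ?thesis
      using True by (simp add: algebra_simps)
  next
    case False
    then show ?thesis
      by (auto simp: dlast_def Suc.IH)
  qed
qed

lemma sum_lists_prod_eq_power_nth:
  fixes h :: "nat \<Rightarrow> 'a::comm_ring_1"
  assumes "\<And>b. d < b \<Longrightarrow> h b = 0"
  shows "(\<Sum>xs | set xs \<subseteq> {..d} \<and> length xs = k. h (sum_list xs) * prod_list (map m xs))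
           = (\<Sum>b\<le>d. h b * (Abs_fps m ^ k) $ b)"
  using assms
proof (induction k arbitrary: h)
  case 0
  have "{xs. set xs \<subseteq> {..d} \<and> length xs = 0} = {[]}"
    by auto
  moreover have "(\<Sum>b\<le>d. h b * (1 :: 'a fps) $ b) = (\<Sum>b\<le>d. if b = 0 then h 0 else 0)"
    by (intro sum.cong) (auto simp: fps_one_nth)
  ultimately show ?case
    by simp
next
  case (Suc k)
  let ?L = "\<lambda>k. {xs. set xs \<subseteq> {..d} \<and> length xs = k}"
  let ?g = "\<lambda>a b. m a * (h (a + b) * (Abs_fps m ^ k) $ b)"
  have "(\<Sum>xs\<in>?L (Suc k). h (sum_list xs) * prod_list (map m xs))
      = (\<Sum>(xs, a)\<in>?L k \<times> {..d}. m a * (h (a + sum_list xs) * prod_list (map m xs)))"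
    unfolding lists_length_Suc_eq by (subst sum.reindex) (auto simp: inj_on_def case_prod_beta mult_ac)
  also have "\<dots> = (\<Sum>a\<le>d. m a * (\<Sum>xs\<in>?L k. h (a + sum_list xs) * prod_list (map m xs)))"
    by (subst sum.cartesian_product[symmetric], subst sum.swap) (simp add: sum_distrib_left)
  also have "\<dots> = (\<Sum>a\<le>d. \<Sum>b\<le>d. ?g a b)"
  proof (intro sum.cong refl)
    fix a
    have "(\<Sum>xs\<in>?L k. h (a + sum_list xs) * prod_list (map m xs)) = (\<Sum>b\<le>d. h (a + b) * (Abs_fps m ^ k) $ b)"
      using Suc.prems by (intro Suc.IH) auto
    then show "m a * (\<Sum>xs\<in>?L k. h (a + sum_list xs) * prod_list (map m xs)) = (\<Sum>b\<le>d. ?g a b)"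
      by (simp add: sum_distrib_left)
  qed
  also have "\<dots> = (\<Sum>(a, b)\<in>{(a, b). a + b \<le> d}. ?g a b)"
    by (subst sum.cartesian_product, rule sum.mono_neutral_right) (auto intro: ccontr simp: Suc.prems)
  also have "\<dots> = (\<Sum>q\<le>d. \<Sum>a\<le>q. ?g a (q - a))"
    by (rule sum.triangle_reindex_eq)
  also have "\<dots> = (\<Sum>q\<le>d. h q * (Abs_fps m ^ Suc k) $ q)"
    by (simp add: fps_mult_nth atLeast0AtMost sum_distrib_left mult_ac)
  finally show ?case .
qed

lemma dx_first_partial_pow_Cons:
  "dx_first (partial_pow k p) (j # rest) =
     of_nat (Suc j) * fact k * (if length rest = k then coeff p (Suc j + sum_list rest + k) else 0)"
  by (simp add: dx_first_def partial_pow_closed_form)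

lemma coeff_Id_nu_app_dx_first_partial_pow:
  "coeff (Id_nu_app m k (dx_first (partial_pow k p))) j =
     of_nat (Suc j) * fact k * poly_pairing p (fps_X ^ Suc j * G_fps m ^ k)"
proof -
  let ?T = "dx_first (partial_pow k p)"
  let ?L = "{xs. set xs \<subseteq> {..degree p} \<and> length xs = k}"
  define g where "g = (\<lambda>j. \<Sum>rest | length rest = k \<and> ?T (j # rest) \<noteq> 0.
                     ?T (j # rest) * prod_list (map m rest))"
  have g: "g j = of_nat (Suc j) * fact k *
             (\<Sum>xs\<in>?L. coeff p (sum_list xs + (Suc j + k)) * prod_list (map m xs))" for j
  proof -
    have "{rest. length rest = k \<and> ?T (j # rest) \<noteq> 0} \<subseteq> ?L"
    proof
      fix rest assume "rest \<in> {rest. length rest = k \<and> ?T (j # rest) \<noteq> 0}"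
      then have "length rest = k" and "Suc j + sum_list rest + k \<le> degree p"
        by (auto simp: dx_first_partial_pow_Cons intro: le_degree)
      then show "rest \<in> ?L"
        using member_le_sum_list[of _ rest] by fastforce
    qed
    then have "g j = (\<Sum>rest\<in>?L. ?T (j # rest) * prod_list (map m rest))"
      unfolding g_def by (intro sum.mono_neutral_left) (auto simp: finite_lists_length_eq)
    also have "\<dots> = (\<Sum>xs\<in>?L. of_nat (Suc j) * fact k *
                      (coeff p (sum_list xs + (Suc j + k)) * prod_list (map m xs)))"
      by (intro sum.cong refl) (auto simp: dx_first_partial_pow_Cons add_ac)
    finally show ?thesis
      by (simp add: sum_distrib_left)
  qed
  have "g i = 0" if "degree p < i" for i
    using that by (simp add: g coeff_eq_0)
  then have "coeff (Abs_poly g) = g"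
    by (rule coeff_Abs_poly)
  moreover have "(\<Sum>xs\<in>?L. coeff p (sum_list xs + (Suc j + k)) * prod_list (map m xs))
      = poly_pairing p (fps_X ^ Suc j * G_fps m ^ k)"
  proof -
    have XG: "fps_X ^ Suc j * G_fps m ^ k = fps_X ^ (Suc j + k) * Abs_fps m ^ k"
      by (simp add: G_fps_def power_mult_distrib power_add mult_ac)
    show ?thesis
      unfolding XG poly_pairing_fps_X_power_mult
      by (rule sum_lists_prod_eq_power_nth[where h = "\<lambda>b. coeff p (b + (Suc j + k))"])
         (simp add: coeff_eq_0)
  qed
  ultimately show ?thesis
    by (simp add: Id_nu_app_def g_def[symmetric] g)
qed

definition cumulant_term :: "(nat \<Rightarrow> complex) \<Rightarrow> (nat \<Rightarrow> complex) \<Rightarrow> complex poly \<Rightarrow> complex poly" where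
  "cumulant_term r m p = (\<Sum>n\<in>{1..Suc (degree p)}.
      smult (r n / fact (n - 1)) (Id_nu_app m (n - 1) (dx_first (partial_pow (n - 1) p))))"

lemma D_op_eq_cumulant_term:
  "D_op mu nu f t = cumulant_term (free_cumulant mu) (boxplus_t nu mu t) (f t) + poly_dt f t"
  by (simp add: D_op_def cumulant_term_def)

lemma coeff_cumulant_term:
  "coeff (cumulant_term r m p) j =
     of_nat (Suc j) * poly_pairing p (fps_X ^ Suc j * (Abs_fps (\<lambda>k. r (Suc k)) oo G_fps m))"
proof -
  have "coeff (cumulant_term r m p) j = (\<Sum>n\<in>{Suc 0..Suc (degree p)}.
      r n / fact (n - 1) * coeff (Id_nu_app m (n - 1) (dx_first (partial_pow (n - 1) p))) j)"
    by (simp add: cumulant_term_def coeff_sum)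
  also have "\<dots> = (\<Sum>k\<le>degree p.
      r (Suc k) / fact k * coeff (Id_nu_app m k (dx_first (partial_pow k p))) j)"
    by (subst sum.shift_bounds_cl_Suc_ivl) (simp add: atLeast0AtMost)
  also have "\<dots> = of_nat (Suc j) * (\<Sum>k\<le>degree p. r (Suc k) * poly_pairing p (fps_X ^ Suc j * G_fps m ^ k))"
    by (simp add: coeff_Id_nu_app_dx_first_partial_pow sum_distrib_left mult_ac)
  also have "\<dots> = of_nat (Suc j) * poly_pairing p (fps_X ^ Suc j * (Abs_fps (\<lambda>k. r (Suc k)) oo G_fps m))"
    by (simp add: poly_pairing_mult_compose)
  finally show ?thesis .
qed

lemma degree_cumulant_term_le: "degree (cumulant_term r m p) \<le> degree p"
proof (rule degree_le, intro allI impI)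
  fix j assume "degree p < j"
  then show "coeff (cumulant_term r m p) j = 0"
    by (simp add: coeff_cumulant_term poly_pairing_fps_X_power_mult coeff_eq_0 del: power_Suc)
qed

text \<open>Pairing with m collapses the sum over j, since \<open>\<Sum>\<^sub>j (j + 1) m j X\<^sup>j\<close> is the
  derivative of \<open>G_fps m\<close>.\<close>
lemma fun_app_cumulant_term:
  "fun_app m (cumulant_term r m p) =
     poly_pairing p (fps_deriv (G_fps m) * (fps_X * (Abs_fps (\<lambda>k. r (Suc k)) oo G_fps m)))"
proof -
  define S where "S = fps_X * (Abs_fps (\<lambda>k. r (Suc k)) oo G_fps m)"
  define c where "c = (\<lambda>j. of_nat (Suc j) * m j)"
  have "fun_app m (cumulant_term r m p) = (\<Sum>j\<le>degree p. coeff (cumulant_term r m p) j * m j)"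
    by (simp add: fun_app_eq_poly_pairing poly_pairing_upto[OF degree_cumulant_term_le])
  also have "\<dots> = (\<Sum>j\<le>degree p. c j * poly_pairing p (fps_X ^ j * S))"
    by (simp add: coeff_cumulant_term c_def S_def mult_ac)
  also have "\<dots> = poly_pairing p ((\<Sum>j\<le>degree p. fps_const (c j) * fps_X ^ j) * S)"
    by (simp add: poly_pairing_sum_const_mult sum_distrib_right mult.assoc)
  also have "\<dots> = poly_pairing p (fps_deriv (G_fps m) * S)"
  proof -
    have "(\<Sum>j\<le>degree p. fps_const (c j) * fps_X ^ j) $ l = fps_deriv (G_fps m) $ l"
      if "l \<le> degree p" for l
    proof -
      have "(\<Sum>j\<le>degree p. fps_const (c j) * fps_X ^ j) $ l = (\<Sum>j\<le>degree p. if j = l then c j else 0)"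
        unfolding fps_sum_nth by (intro sum.cong) (auto simp: fps_X_power_nth)
      then show ?thesis
        using that by (simp add: c_def G_fps_def algebra_simps)
    qed
    then show ?thesis
      by (intro poly_pairing_cong fps_mult_nth_cong(1)) auto
  qed
  finally show ?thesis
    by (simp add: S_def)
qed

lemma at_within_atLeast_neq_bot:
  assumes "(a :: real) \<le> t"
  shows "at t within {a..} \<noteq> bot"
proof -
  have "at_right t \<le> at t within {a..}"
    using assms by (intro at_le) auto
  then show ?thesis
    using trivial_limit_at_right_real[of t] by (auto simp: bot_unique)
qed

lemma poly_dt_of_degree_bound:
  assumes N: "\<forall>s\<ge>0. degree (f s) \<le> N" and t: "t \<ge> 0"
  shows "coeff (poly_dt f t) k = vector_derivative (\<lambda>s. coeff (f s) k) (at t within {0..})"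
    and "degree (poly_dt f t) \<le> N"
proof -
  have vanish: "vector_derivative (\<lambda>s. coeff (f s) k) (at t within {0..}) = 0" if k: "N < k" for k
  proof -
    have "coeff (f s) k = 0" if "s \<in> {0..}" for s
      using N that k by (intro coeff_eq_0) (auto intro: le_less_trans)
    then have "((\<lambda>s. coeff (f s) k) has_vector_derivative 0) (at t within {0..})"
      using t by (intro has_vector_derivative_transform[OF _ _ has_vector_derivative_const]) auto
    then show ?thesis
      by (rule vector_derivative_within[OF at_within_atLeast_neq_bot[OF t]])
  qed
  then have coeff_dt: "coeff (poly_dt f t) = (\<lambda>k. vector_derivative (\<lambda>s. coeff (f s) k) (at t within {0..}))"
    unfolding poly_dt_def by (rule coeff_Abs_poly)
  then show "coeff (poly_dt f t) k = vector_derivative (\<lambda>s. coeff (f s) k) (at t within {0..})"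
    by simp
  show "degree (poly_dt f t) \<le> N"
    by (rule degree_le) (simp add: coeff_dt vanish)
qed

lemma C1_poly_coeff_has_vector_derivative:
  assumes f: "C1_poly f" and t: "t \<ge> 0"
  shows "((\<lambda>s. coeff (f s) k) has_vector_derivative coeff (poly_dt f t) k) (at t within {0..})"
proof -
  obtain N where "\<forall>s\<ge>0. degree (f s) \<le> N"
    using f by (auto simp: C1_poly_def)
  moreover have "(\<lambda>s. coeff (f s) k) differentiable (at t within {0..})"
  proof -
    obtain f' where "\<forall>t\<ge>0. ((\<lambda>s. coeff (f s) k) has_vector_derivative f' t) (at t within {0..})"
      using f unfolding C1_poly_def by blast
    then show ?thesis
      using t by (auto intro: differentiableI_vector)
  qed
  ultimately show ?thesis
    using t by (simp add: poly_dt_of_degree_bound vector_derivative_works)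
qed

lemma fun_app_boxplus_t_has_vector_derivative:
  assumes nu0: "nu 0 = 1" and mu0: "mu 0 = 1" and f: "C1_poly f" and t: "t \<ge> 0"
  shows "((\<lambda>s. fun_app (boxplus_t nu mu s) (f s)) has_vector_derivative
           fun_app (boxplus_t nu mu t) (D_op mu nu f t)) (at t within {0..})"
proof -
  define m where "m = boxplus_t nu mu"
  obtain N where N: "\<forall>s\<ge>0. degree (f s) \<le> N"
    using f by (auto simp: C1_poly_def)
  have "has_fps_derivative_upto N (\<lambda>s. Abs_fps (m s)) (moment_drift mu (m t)) t {0..}"
    using boxplus_t_has_vector_derivative[of nu mu, OF nu0 mu0]
    by (simp add: has_fps_derivative_upto_def m_def)
  then have "((\<lambda>s. poly_pairing (f s) (Abs_fps (m s))) has_vector_derivative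
      poly_pairing (f t) (moment_drift mu (m t)) + poly_pairing (poly_dt f t) (Abs_fps (m t)))
      (at t within {0..})"
    using N t poly_dt_of_degree_bound(2)[OF N t] C1_poly_coeff_has_vector_derivative[OF f t]
    by (intro has_vector_derivative_poly_pairing) auto
  moreover have "poly_pairing (f t) (moment_drift mu (m t)) =
      fun_app (m t) (cumulant_term (free_cumulant mu) (m t) (f t))"
    unfolding moment_drift_def fps_shift_cumulant_fps[of mu, OF mu0]
    by (rule fun_app_cumulant_term[symmetric])
  ultimately show ?thesis
    by (simp add: m_def fun_app_eq_poly_pairing D_op_eq_cumulant_term poly_pairing_add_left)
qed

lemma coeff_K_op:
  "coeff (K_op mut s t p) k = poly_pairing p (fps_shift 1 (phi_st mut s t ^ Suc k))"
proof -
  have phi0: "phi_st mut s t $ 0 = 0"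
    by (simp add: phi_st_def)
  have "coeff (K_op mut s t p) k =
      (\<Sum>n\<le>degree p. coeff p n * (if k \<le> n then (phi_st mut s t ^ (k + 1)) $ (n + 1) else 0))"
    unfolding K_op_def coeff_sum coeff_smult coeff_monom by (simp add: sum.delta)
  also have "\<dots> = poly_pairing p (fps_shift 1 (phi_st mut s t ^ Suc k))"
    unfolding poly_pairing_def
    using startsby_zero_power_prefix[OF phi0, of "Suc k"] by (intro sum.cong) auto
  finally show ?thesis .
qed

lemma martingale_poly_coeff_eq:
  assumes mart: "martingale_poly mut f" and s: "0 \<le> s" "s \<le> t" and m0: "moments (mut s) 0 \<noteq> 0"
  shows "coeff (f s) k = poly_pairing (f t) (fps_shift 1 (phi_st mut s t ^ Suc k))"
proof (cases "s = t")
  case True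
  have "phi_st mut s s = fps_X"
    using m0 by (simp add: phi_st_def fps_inv)
  then show ?thesis
    using True by (simp add: poly_pairing_fps_X_power del: power_Suc)
next
  case False
  then have "K_op mut s t (f t) = f s"
    using mart s by (simp add: martingale_poly_def)
  then show ?thesis
    by (metis coeff_K_op)
qed

lemma martingale_poly_boxplus_t_pairing_eq:
  assumes mu0: "mu 0 = 1" and mt: "\<And>t. 0 \<le> t \<Longrightarrow> moments (mut t) = boxplus_t delta0 mu t"
    and mart: "martingale_poly mut f" and s: "0 \<le> s" "s \<le> t"
  defines "A \<equiv> \<lambda>t. G_fps (boxplus_t delta0 mu t)"
  shows "poly_pairing (f t) (fps_shift 1 ((fps_inv (A s) oo A t) ^ Suc k)) = coeff (f s) k"
proof -
  have "moments (mut s) 0 = 1"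
    using mt[OF s(1)] boxplus_t_cumulant_fps(1)[of delta0 mu, OF _ mu0] by (simp add: delta0_def)
  then show ?thesis
    using martingale_poly_coeff_eq[OF mart s, of k] mt[of s] mt[of t] s
    by (simp add: A_def phi_st_def G_fps_def)
qed

lemma martingale_poly_imp_D_op_delta0_eq_0:
  assumes mu0: "mu 0 = 1" and mt: "\<And>t. 0 \<le> t \<Longrightarrow> moments (mut t) = boxplus_t delta0 mu t"
    and f: "C1_poly f" and mart: "martingale_poly mut f" and s: "0 \<le> s"
  shows "D_op mu delta0 f s = 0"
proof (rule poly_eqI)
  fix k
  define A where "A = (\<lambda>t. G_fps (boxplus_t delta0 mu t))"
  define psi where "psi = (\<lambda>t. fps_shift 1 ((fps_inv (A s) oo A t) ^ Suc k))"
  define Sg where "Sg = fps_shift 1 (cumulant_fps mu) oo A s"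
  have d0: "delta0 0 = 1" by (simp add: delta0_def)
  obtain N where N: "\<forall>t\<ge>0. degree (f t) \<le> N"
    using f by (auto simp: C1_poly_def)
  have "poly_pairing (f t) (psi t) = coeff (f s) k" if "t \<in> {s..}" for t
    using martingale_poly_boxplus_t_pairing_eq[OF mu0 mt mart s] that by (simp add: psi_def A_def)
  then have "((\<lambda>t. poly_pairing (f t) (psi t)) has_vector_derivative 0) (at s within {s..})"
    by (intro has_vector_derivative_transform[OF _ _ has_vector_derivative_const]) auto
  moreover have "((\<lambda>t. poly_pairing (f t) (psi t)) has_vector_derivative
      poly_pairing (f s) (of_nat (Suc k) * fps_X ^ Suc k * Sg) + poly_pairing (poly_dt f s) (psi s))
      (at s within {s..})"
  proof (rule has_vector_derivative_poly_pairing)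
    show "has_fps_derivative_upto N psi (of_nat (Suc k) * fps_X ^ Suc k * Sg) s {s..}"
      unfolding psi_def Sg_def A_def
      by (rule shift_fps_inv_compose_power_has_fps_derivative[of delta0 mu, OF d0 mu0])
    show "((\<lambda>t. coeff (f t) n) has_vector_derivative coeff (poly_dt f s) n) (at s within {s..})" for n
      using s
      by (intro has_vector_derivative_within_subset[OF C1_poly_coeff_has_vector_derivative[OF f s]])
         auto
  qed (use N s poly_dt_of_degree_bound(2)[OF N s] in auto)
  ultimately have "0 = poly_pairing (f s) (of_nat (Suc k) * fps_X ^ Suc k * Sg)
                        + poly_pairing (poly_dt f s) (psi s)"
    using vector_derivative_unique_within[OF at_within_atLeast_neq_bot] by blast
  also have "psi s = fps_X ^ k"
    using fps_inv[of "A s"] boxplus_t_cumulant_fps(1)[of delta0 mu, OF d0 mu0]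
    by (simp add: psi_def A_def del: power_Suc)
  also have "poly_pairing (poly_dt f s) (fps_X ^ k) = coeff (poly_dt f s) k"
    by (rule poly_pairing_fps_X_power)
  also have "poly_pairing (f s) (of_nat (Suc k) * fps_X ^ Suc k * Sg) =
      coeff (cumulant_term (free_cumulant mu) (boxplus_t delta0 mu s) (f s)) k"
    unfolding Sg_def A_def fps_shift_cumulant_fps[of mu, OF mu0]
    by (simp add: coeff_cumulant_term fps_of_nat[symmetric] poly_pairing_const_mult mult.assoc
        del: power_Suc)
  finally show "coeff (D_op mu delta0 f s) k = coeff 0 k"
    by (simp add: D_op_eq_cumulant_term)
qed

theorem lemma4p3:
  fixes \<mu> :: "real measure" and \<mu>t :: "real \<Rightarrow> real measure" and \<nu> :: "nat \<Rightarrow> complex"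
  assumes "prob_space \<mu>" and "sets \<mu> = sets borel"
    and "\<forall>n. integrable \<mu> (\<lambda>x. x ^ n)"
    and "\<forall>t\<ge>0. prob_space (\<mu>t t) \<and> sets (\<mu>t t) = sets borel \<and> (\<forall>n. integrable (\<mu>t t) (\<lambda>x. x ^ n))"
    and "\<mu>t 1 = \<mu>"
    and "\<forall>t\<ge>0. \<forall>n\<ge>1. free_cumulant (moments (\<mu>t t)) n = complex_of_real t * free_cumulant (moments \<mu>) n"
    and "\<nu> 0 = 1"
  shows "(\<forall>f. C1_poly f \<longrightarrow> (\<forall>t\<ge>0.
            ((\<lambda>s. fun_app (boxplus_t \<nu> (moments \<mu>) s) (f s)) has_vector_derivative
               fun_app (boxplus_t \<nu> (moments \<mu>) t) (D_op (moments \<mu>) \<nu> f t)) (at t within {0..})))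
       \<and> (\<forall>f. C1_poly f \<and> martingale_poly \<mu>t f \<longrightarrow> (\<forall>t\<ge>0. D_op (moments \<mu>) delta0 f t = 0))"
proof -
  have mu0: "moments \<mu> 0 = 1"
    using assms(1) by (rule moments_0)
  have "moments (\<mu>t t) = boxplus_t delta0 (moments \<mu>) t" if "0 \<le> t" for t
    using assms(4,6) that mu0
    by (intro boxplus_t_eqI[symmetric]) (auto simp: moments_0 free_cumulant_delta0 delta0_def)
  then show ?thesis
    using fun_app_boxplus_t_has_vector_derivative[of \<nu> "moments \<mu>", OF assms(7) mu0]
      martingale_poly_imp_D_op_delta0_eq_0[of "moments \<mu>" \<mu>t, OF mu0] by blast
qed

end
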